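(* Let $T_1,T_2$ be tables joined on column $J$, $T_1$ having a real-valued column $W$. Fix UBS parameters $(p_1,q_1)\in(0,1]^2$ for $T_1$ and an effective sampling rate $\epsilon_2\in(0,1]$ for $T_2$ with $\epsilon_2\le p_1$. Over all UBS parameters $(p_2,q_2)$ for $T_2$ with $p_2\in[\epsilon_2,1]$ and $q_2=\epsilon_2/p_2$, the variance of $\hat J_{\mathrm{sum}}=\frac{1}{\min\{p_1,p_2\}q_1q_2}\sum_{(t_1,t_2)\in S_1\bowtie_J S_2}t_1.W$ (with $S_i=\mathrm{UBS}_{p_i,q_i}(T_i,J)$) is minimized when $p_2=p_1$ and $q_2=\epsilon_2/p_1$.
   Context: $T_1,T_2$ are finite multisets of tuples with a join attribute $J$ taking values in a finite set $\mathcal U$. $X\bowtie_J Y$ is the set of pairs $(t_1,t_2)\in X\times Y$ with $t_1.J=t_2.J$. $\mathrm{UBS}_{p,q}(T,J)$: given a hash function $h:\mathcal U\to[0,1]$, each tuple $t\in T$ with $h(t.J)<p$ is included independently with probability $q$; others are excluded. The values $h(v)$ are independent uniform on $[0,1]$, the same $h$ is used for both tables, and the Bernoulli coins are independent across all tuples and independent of $h$. *)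

theory Defs
  imports "HOL-Probability.Probability"
begin

text \<open>Sample space of the joint UBS experiment on two tables:
  hash values h(v) for every v in the finite universe 'u (i.i.d. uniform on [0,1]),
  Bernoulli(q1) coins for the n1 tuples of T1 and Bernoulli(q2) coins for the n2 tuples of T2,
  all mutually independent.\<close>
definition ubs_space :: "real \<Rightarrow> real \<Rightarrow> nat \<Rightarrow> nat \<Rightarrow>
    (('u::finite \<Rightarrow> real) \<times> ((nat \<Rightarrow> bool) \<times> (nat \<Rightarrow> bool))) measure" where
  "ubs_space q1 q2 n1 n2 =
     (PiM UNIV (\<lambda>_. uniform_measure lborel {0..1::real})) \<Otimes>\<^sub>M
     ((PiM {..<n1} (\<lambda>_. measure_pmf (bernoulli_pmf q1))) \<Otimes>\<^sub>M
      (PiM {..<n2} (\<lambda>_. measure_pmf (bernoulli_pmf q2))))"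

text \<open>Tuple i of T1 is in S1 = UBS_{p1,q1}(T1,J) iff h(t.J) < p1 and its coin is heads; same for T2.
  The estimator J_sum = 1/(min p1 p2 * q1 * q2) * sum over (t1,t2) in S1 join S2 of t1.W.\<close>
definition J_sum :: "'t1 list \<Rightarrow> ('t1 \<Rightarrow> 'u) \<Rightarrow> ('t1 \<Rightarrow> real) \<Rightarrow> 't2 list \<Rightarrow> ('t2 \<Rightarrow> 'u)
    \<Rightarrow> real \<Rightarrow> real \<Rightarrow> real \<Rightarrow> real
    \<Rightarrow> ('u \<Rightarrow> real) \<times> ((nat \<Rightarrow> bool) \<times> (nat \<Rightarrow> bool)) \<Rightarrow> real" where
  "J_sum T1 J1 W T2 J2 p1 q1 p2 q2 \<omega> =
     (let h = fst \<omega>; c1 = fst (snd \<omega>); c2 = snd (snd \<omega>) in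
      (1 / (min p1 p2 * q1 * q2)) *
      (\<Sum>i<length T1. \<Sum>k<length T2.
         if h (J1 (T1 ! i)) < p1 \<and> c1 i \<and> h (J2 (T2 ! k)) < p2 \<and> c2 k
            \<and> J1 (T1 ! i) = J2 (T2 ! k)
         then W (T1 ! i) else 0))"

definition var_of :: "'a measure \<Rightarrow> ('a \<Rightarrow> real) \<Rightarrow> real" where
  "var_of M X = (\<integral>x. (X x - (\<integral>y. X y \<partial>M))\<^sup>2 \<partial>M)"

definition ubs_var :: "'t1 list \<Rightarrow> ('t1 \<Rightarrow> 'u::finite) \<Rightarrow> ('t1 \<Rightarrow> real) \<Rightarrow> 't2 list \<Rightarrow> ('t2 \<Rightarrow> 'u)
    \<Rightarrow> real \<Rightarrow> real \<Rightarrow> real \<Rightarrow> real \<Rightarrow> real" where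
  "ubs_var T1 J1 W T2 J2 p1 q1 p2 q2 =
     var_of (ubs_space q1 q2 (length T1) (length T2)) (J_sum T1 J1 W T2 J2 p1 q1 p2 q2)"

end

theory Submission
  imports Defs
begin

text \<open>With m = min p1 p2, a joining pair (i, k) with join value v survives exactly when
  h(v) < m and both coins are heads, so the estimator is (1 / (m q1 q2)) times a sum of such
  indicators weighted by W. It is unbiased, and since the hash values and the two coin families are
  independent, its second moment is the sum over pairs of joining pairs of the product of their
  weights times 1/m (if v = v'), 1/q1 (if i = i') and 1/q2 (if k = k'). Only the terms with v = v'
  depend on (p2, q2), through the coefficients 1/m and 1/(m q2); under p2 q2 = eps2 both are
  smallest at p2 = p1. Grouped by join value, the terms they multiply are the nonnegative quantity
  (sum w)^2 + (1/q1 - 1) (sum w^2) times a count, so the variance is minimised there.\<close>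

lemma integral_pair_measure_fst_snd_mult:
  fixes f :: "'a \<Rightarrow> real" and g :: "'b \<Rightarrow> real"
  assumes "finite_measure M1" "finite_measure M2"
    and [measurable]: "f \<in> borel_measurable M1" "g \<in> borel_measurable M2"
    and f_bound: "\<And>x. \<bar>f x\<bar> \<le> B" and g_bound: "\<And>y. \<bar>g y\<bar> \<le> C"
  shows "integrable (M1 \<Otimes>\<^sub>M M2) (\<lambda>z. f (fst z) * g (snd z))"
    and "(\<integral>z. f (fst z) * g (snd z) \<partial>(M1 \<Otimes>\<^sub>M M2)) = integral\<^sup>L M1 f * integral\<^sup>L M2 g"
proof -
  interpret pair_sigma_finite M1 M2
    using assms(1,2) by (simp add: pair_sigma_finite_def finite_measure_def)
  interpret finite_measure "M1 \<Otimes>\<^sub>M M2"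
    using assms(2,1) by (rule finite_measure_pair_measure)
  show int: "integrable (M1 \<Otimes>\<^sub>M M2) (\<lambda>z. f (fst z) * g (snd z))"
    by (rule integrable_const_bound[where B="B * C"])
       (auto simp: abs_mult intro!: mult_mono f_bound g_bound order.trans[OF abs_ge_zero f_bound])
  have "(\<integral>z. f (fst z) * g (snd z) \<partial>(M1 \<Otimes>\<^sub>M M2)) = (\<integral>x. (\<integral>y. f x * g y \<partial>M2) \<partial>M1)"
    using integral_fst[of "\<lambda>x y. f x * g y"] int by (simp add: case_prod_beta')
  then show "(\<integral>z. f (fst z) * g (snd z) \<partial>(M1 \<Otimes>\<^sub>M M2)) = integral\<^sup>L M1 f * integral\<^sup>L M2 g"
    by simp
qed

lemma integral_PiM_two_coordinates:
  fixes \<phi> \<psi> :: "'a \<Rightarrow> real"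
  assumes "finite I" "prob_space N" "a \<in> I" "b \<in> I"
    and [measurable]: "\<phi> \<in> borel_measurable N" "\<psi> \<in> borel_measurable N"
    and "\<And>t. \<bar>\<phi> t\<bar> \<le> B" "\<And>t. \<bar>\<psi> t\<bar> \<le> C"
  shows "(\<integral>x. \<phi> (x a) * \<psi> (x b) \<partial>PiM I (\<lambda>_. N)) =
    (if a = b then \<integral>t. \<phi> t * \<psi> t \<partial>N else integral\<^sup>L N \<phi> * integral\<^sup>L N \<psi>)"
proof -
  interpret product_prob_space "\<lambda>_. N" I
    using assms(2)
    by (simp add: product_prob_space_def product_sigma_finite_def product_prob_space_axioms_def
        prob_space_imp_sigma_finite)
  define F where "F j t = (if j = a then \<phi> t else 1) * (if j = b then \<psi> t else 1)" for j t
  have "(\<integral>x. \<phi> (x a) * \<psi> (x b) \<partial>PiM I (\<lambda>_. N)) = (\<integral>x. (\<Prod>j\<in>I. F j (x j)) \<partial>PiM I (\<lambda>_. N))"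
    using assms(1,3,4) by (simp add: F_def prod.distrib)
  also have "\<dots> = (\<Prod>j\<in>I. integral\<^sup>L N (F j))"
  proof (rule product_integral_prod[OF assms(1)])
    fix j
    have "\<bar>F j t\<bar> \<le> max 1 B * max 1 C" for t
      unfolding F_def abs_mult
      by (intro mult_mono) (auto intro: order.trans[OF _ max.cobounded2] assms(7,8))
    then show "integrable N (F j)"
    proof (intro finite_measure.integrable_const_bound[where B="max 1 B * max 1 C"] AE_I2)
      show "finite_measure N" using assms(2) by (simp add: prob_space_def)
      show "F j \<in> borel_measurable N" unfolding F_def by measurable
    qed simp
  qed
  also have "\<dots> = (if a = b then \<integral>t. \<phi> t * \<psi> t \<partial>N else integral\<^sup>L N \<phi> * integral\<^sup>L N \<psi>)"
  proof (cases "a = b")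
    case True
    then have "integral\<^sup>L N (F j) = (if j = a then \<integral>t. \<phi> t * \<psi> t \<partial>N else 1)" for j
      using assms(2) by (simp add: F_def[abs_def] prob_space.prob_space)
    then show ?thesis using True assms(1,3) by simp
  next
    case False
    then have "integral\<^sup>L N (F j) = (if j = a then integral\<^sup>L N \<phi> else 1) * (if j = b then integral\<^sup>L N \<psi> else 1)" for j
      using assms(2) by (simp add: F_def[abs_def] prob_space.prob_space)
    then show ?thesis using False assms(1,3,4) by (simp add: prod.distrib)
  qed
  finally show ?thesis .
qed

lemma sum_grouped_products_eq:
  fixes u :: "'i \<Rightarrow> 'u::finite" and w :: "'i \<Rightarrow> real"
  shows "(\<Sum>i\<in>I. \<Sum>i'\<in>I. if u i = u i' then w i * w i' * N (u i) else 0) =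
    (\<Sum>v\<in>UNIV. N v * (\<Sum>i\<in>I. if u i = v then w i else 0)\<^sup>2)"
proof -
  have "(\<Sum>v\<in>UNIV. N v * (\<Sum>i\<in>I. if u i = v then w i else 0)\<^sup>2) =
      (\<Sum>v\<in>UNIV. \<Sum>i\<in>I. \<Sum>i'\<in>I. N v * ((if u i = v then w i else 0) * (if u i' = v then w i' else 0)))"
    unfolding power2_eq_square sum_product unfolding sum_distrib_left ..
  also have "\<dots> = (\<Sum>i\<in>I. \<Sum>i'\<in>I. \<Sum>v\<in>UNIV. N v * ((if u i = v then w i else 0) * (if u i' = v then w i' else 0)))"
    by (rule trans[OF sum.swap], rule sum.cong[OF refl], rule sum.swap)
  also have "\<dots> = (\<Sum>i\<in>I. \<Sum>i'\<in>I. \<Sum>v\<in>UNIV. if u i = v then (if u i = u i' then w i * w i' * N (u i) else 0) else 0)"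
    by (intro sum.cong refl) auto
  finally show ?thesis by simp
qed

lemma grouped_quadratic_form_nonneg:
  fixes u :: "'i \<Rightarrow> 'u::finite" and w :: "'i \<Rightarrow> real"
  assumes "finite I" "\<And>v. 0 \<le> N v" "1 \<le> c"
  shows "0 \<le> (\<Sum>i\<in>I. \<Sum>i'\<in>I. if u i = u i' then w i * w i' * (if i = i' then c else 1) * N (u i) else 0)"
proof -
  have split: "(if u i = u i' then w i * w i' * (if i = i' then c else 1) * N (u i) else 0) =
      (if u i = u i' then w i * w i' * N (u i) else 0) + (if i = i' then (c - 1) * (w i)\<^sup>2 * N (u i) else 0)"
    for i i'
    by (simp add: power2_eq_square algebra_simps)
  have "0 \<le> (\<Sum>i\<in>I. \<Sum>i'\<in>I. if u i = u i' then w i * w i' * N (u i) else 0) +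
      (\<Sum>i\<in>I. (c - 1) * (w i)\<^sup>2 * N (u i))"
    unfolding sum_grouped_products_eq using assms(2,3)
    by (intro add_nonneg_nonneg sum_nonneg mult_nonneg_nonneg) auto
  also have "\<dots> = (\<Sum>i\<in>I. \<Sum>i'\<in>I. if u i = u i' then w i * w i' * (if i = i' then c else 1) * N (u i) else 0)"
    unfolding split sum.distrib using assms(1) by simp
  finally show ?thesis .
qed
definition join_pair_sampled :: "real \<Rightarrow> 'u \<Rightarrow> nat \<Rightarrow> nat \<Rightarrow>
    ('u \<Rightarrow> real) \<times> (nat \<Rightarrow> bool) \<times> (nat \<Rightarrow> bool) \<Rightarrow> real" where
  "join_pair_sampled m v i k \<omega> =
     indicator {..<m} (fst \<omega> v) * of_bool (fst (snd \<omega>) i) * of_bool (snd (snd \<omega>) k)"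

lemma has_bochner_integral_join_pair_sampled_mult:
  fixes v v' :: "'u::finite"
  assumes "0 \<le> m" "m \<le> 1" "0 \<le> q1" "q1 \<le> 1" "0 \<le> q2" "q2 \<le> 1"
    and "i < n1" "i' < n1" "k < n2" "k' < n2"
  shows "has_bochner_integral (ubs_space q1 q2 n1 n2)
    (\<lambda>\<omega>. join_pair_sampled m v i k \<omega> * join_pair_sampled m v' i' k' \<omega>)
    ((if v = v' then m else m\<^sup>2) * (if i = i' then q1 else q1\<^sup>2) * (if k = k' then q2 else q2\<^sup>2))"
proof -
  let ?U = "uniform_measure lborel {0..1::real}"
  let ?H = "PiM (UNIV :: 'u set) (\<lambda>_. ?U)"
  let ?C1 = "PiM {..<n1} (\<lambda>_. measure_pmf (bernoulli_pmf q1))"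
  let ?C2 = "PiM {..<n2} (\<lambda>_. measure_pmf (bernoulli_pmf q2))"
  have U: "prob_space ?U" by (rule prob_space_uniform_measure) auto
  have H: "prob_space ?H" using U by (rule prob_space_PiM)
  have C1: "prob_space ?C1" and C2: "prob_space ?C2"
    by (intro prob_space_PiM prob_space_measure_pmf)+
  define f where "f h = (indicator {..<m} (h v) * indicator {..<m} (h v') :: real)" for h :: "'u \<Rightarrow> real"
  define g1 where "g1 c = (of_bool (c i) * of_bool (c i') :: real)" for c :: "nat \<Rightarrow> bool"
  define g2 where "g2 c = (of_bool (c k) * of_bool (c k') :: real)" for c :: "nat \<Rightarrow> bool"
  define g where "g c = g1 (fst c) * g2 (snd c)" for c
  have f_measurable: "f \<in> borel_measurable ?H" unfolding f_def by measurable
  have [measurable]: "g1 \<in> borel_measurable ?C1" unfolding g1_def using assms(7,8)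
    by (intro borel_measurable_times; measurable)
  have [measurable]: "g2 \<in> borel_measurable ?C2" unfolding g2_def using assms(9,10)
    by (intro borel_measurable_times; measurable)
  have g_measurable: "g \<in> borel_measurable (?C1 \<Otimes>\<^sub>M ?C2)" unfolding g_def by measurable
  have bounds: "\<bar>f h\<bar> \<le> 1" "\<bar>g1 c1\<bar> \<le> 1" "\<bar>g2 c2\<bar> \<le> 1" "\<bar>g c\<bar> \<le> 1" for h c1 c2 c
    by (simp_all add: f_def g_def g1_def g2_def indicator_def)
  note pair_mult = integral_pair_measure_fst_snd_mult[OF prob_space.axioms(1) prob_space.axioms(1)]
  have "{0..1} \<inter> {..<m} = {0..<m}" using assms(1,2) by auto
  then have "integral\<^sup>L ?H f = (if v = v' then m else m\<^sup>2)"
    using integral_PiM_two_coordinates[OF _ U, of UNIV v v' "indicator {..<m}" "indicator {..<m}" 1 1]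
    by (simp add: f_def[abs_def] indicator_inter_arith[symmetric] measure_uniform_measure assms power2_eq_square)
  moreover have "integral\<^sup>L ?C1 g1 = (if i = i' then q1 else q1\<^sup>2)"
    using integral_PiM_two_coordinates[where I="{..<n1}" and a=i and b=i' and \<phi>=of_bool and \<psi>=of_bool
        and B=1 and C=1, OF _ prob_space_measure_pmf] assms
    by (simp add: g1_def[abs_def] power2_eq_square)
  moreover have "integral\<^sup>L ?C2 g2 = (if k = k' then q2 else q2\<^sup>2)"
    using integral_PiM_two_coordinates[where I="{..<n2}" and a=k and b=k' and \<phi>=of_bool and \<psi>=of_bool
        and B=1 and C=1, OF _ prob_space_measure_pmf] assms
    by (simp add: g2_def[abs_def] power2_eq_square)
  moreover have "integral\<^sup>L (?C1 \<Otimes>\<^sub>M ?C2) g = integral\<^sup>L ?C1 g1 * integral\<^sup>L ?C2 g2"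
    unfolding g_def[abs_def] by (rule pair_mult(2)[OF C1 C2 _ _ bounds(2,3)]) measurable
  moreover note pair_mult[OF H prob_space_pair[OF C1 C2] f_measurable g_measurable bounds(1,4)]
  moreover have "join_pair_sampled m v i k \<omega> * join_pair_sampled m v' i' k' \<omega> = f (fst \<omega>) * g (snd \<omega>)" for \<omega>
    by (simp add: join_pair_sampled_def f_def g_def g1_def g2_def mult_ac)
  ultimately show ?thesis
    unfolding has_bochner_integral_iff ubs_space_def by (simp add: mult_ac)
qed

lemma join_pair_sampled_idem:
  "join_pair_sampled m v i k \<omega> * join_pair_sampled m v i k \<omega> = join_pair_sampled m v i k \<omega>"
  by (simp add: join_pair_sampled_def indicator_def)

lemma has_bochner_integral_join_pair_sampled:
  fixes v :: "'u::finite"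
  assumes "0 \<le> m" "m \<le> 1" "0 \<le> q1" "q1 \<le> 1" "0 \<le> q2" "q2 \<le> 1" "i < n1" "k < n2"
  shows "has_bochner_integral (ubs_space q1 q2 n1 n2) (join_pair_sampled m v i k) (m * q1 * q2)"
  using has_bochner_integral_join_pair_sampled_mult[OF assms(1-7,7,8,8), of v v]
  by (simp add: join_pair_sampled_idem)

locale join_tables =
  fixes T1 :: "'t1 list" and J1 :: "'t1 \<Rightarrow> 'u::finite" and W :: "'t1 \<Rightarrow> real"
    and T2 :: "'t2 list" and J2 :: "'t2 \<Rightarrow> 'u"
begin

definition join_term :: "nat \<Rightarrow> nat \<Rightarrow> real" where
  "join_term i k = (if J1 (T1 ! i) = J2 (T2 ! k) then W (T1 ! i) else 0)"

definition join_sum :: real where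
  "join_sum = (\<Sum>i<length T1. \<Sum>k<length T2. join_term i k)"

definition second_moment :: "real \<Rightarrow> real \<Rightarrow> real \<Rightarrow> real" where
  "second_moment m q1 q2 = (\<Sum>i<length T1. \<Sum>i'<length T1. \<Sum>k<length T2. \<Sum>k'<length T2.
     join_term i k * join_term i' k' * (if J1 (T1 ! i) = J1 (T1 ! i') then 1 / m else 1) *
     (if i = i' then 1 / q1 else 1) * (if k = k' then 1 / q2 else 1))"

lemma J_sum_eq_sum_join_pair_sampled:
  "J_sum T1 J1 W T2 J2 p1 q1 p2 q2 \<omega> = 1 / (min p1 p2 * q1 * q2) *
     (\<Sum>i<length T1. \<Sum>k<length T2. join_term i k * join_pair_sampled (min p1 p2) (J1 (T1 ! i)) i k \<omega>)"
  unfolding J_sum_def Let_def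
  by (intro arg_cong2[where f="(*)"] refl sum.cong)
     (auto simp: join_term_def join_pair_sampled_def indicator_def)

lemma second_moment_mono:
  assumes "0 < q1" "q1 \<le> 1" "1 / m \<le> 1 / m'" "1 / (m * Q) \<le> 1 / (m' * Q')"
  shows "second_moment m q1 Q \<le> second_moment m' q1 Q'"
proof -
  define D where "D k k' = (if k = k' then 1 / (m' * Q') - 1 / (m * Q) else 1 / m' - 1 / m)" for k k' :: nat
  define N where "N v = (\<Sum>k<length T2. \<Sum>k'<length T2.
    if J2 (T2 ! k) = v \<and> J2 (T2 ! k') = v then D k k' else 0)" for v
  have "0 \<le> D k k'" for k k' using assms(3,4) by (simp add: D_def)
  then have N_nonneg: "0 \<le> N v" for v unfolding N_def by (intro sum_nonneg) auto
  have "second_moment m' q1 Q' - second_moment m q1 Q =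
    (\<Sum>i<length T1. \<Sum>i'<length T1. \<Sum>k<length T2. \<Sum>k'<length T2.
      if J1 (T1 ! i) = J1 (T1 ! i') then W (T1 ! i) * W (T1 ! i') * (if i = i' then 1 / q1 else 1) *
        (if J2 (T2 ! k) = J1 (T1 ! i) \<and> J2 (T2 ! k') = J1 (T1 ! i) then D k k' else 0) else 0)"
    unfolding second_moment_def sum_subtractf[symmetric]
    by (intro sum.cong refl) (auto simp: join_term_def D_def algebra_simps diff_divide_distrib)
  also have "\<dots> = (\<Sum>i<length T1. \<Sum>i'<length T1. if J1 (T1 ! i) = J1 (T1 ! i')
      then W (T1 ! i) * W (T1 ! i') * (if i = i' then 1 / q1 else 1) * N (J1 (T1 ! i)) else 0)"
    unfolding N_def by (intro sum.cong refl) (simp add: sum_distrib_left)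
  also have "\<dots> \<ge> 0"
    using assms(1,2) N_nonneg by (intro grouped_quadratic_form_nonneg) auto
  finally show ?thesis by simp
qed

context
  fixes p1 q1 p2 q2 :: real
  assumes p1: "0 < p1" "p1 \<le> 1" and q1: "0 < q1" "q1 \<le> 1"
    and p2: "0 < p2" "p2 \<le> 1" and q2: "0 < q2" "q2 \<le> 1"
begin

lemma has_bochner_integral_J_sum:
  "has_bochner_integral (ubs_space q1 q2 (length T1) (length T2)) (J_sum T1 J1 W T2 J2 p1 q1 p2 q2) join_sum"
proof -
  let ?m = "min p1 p2"
  have m: "0 \<le> ?m" "?m \<le> 1" using p1 p2 by auto
  have "has_bochner_integral (ubs_space q1 q2 (length T1) (length T2)) (J_sum T1 J1 W T2 J2 p1 q1 p2 q2)
    (1 / (?m * q1 * q2) * (\<Sum>i<length T1. \<Sum>k<length T2. join_term i k * (?m * q1 * q2)))"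
    unfolding J_sum_eq_sum_join_pair_sampled[abs_def] using m q1 q2
    by (intro has_bochner_integral_mult_right has_bochner_integral_sum has_bochner_integral_join_pair_sampled) auto
  also have "1 / (?m * q1 * q2) * (\<Sum>i<length T1. \<Sum>k<length T2. join_term i k * (?m * q1 * q2)) = join_sum"
    using p1 p2 q1 q2 by (simp add: join_sum_def sum_distrib_left sum_distrib_right[symmetric])
  finally show ?thesis .
qed

lemma has_bochner_integral_J_sum_square:
  "has_bochner_integral (ubs_space q1 q2 (length T1) (length T2))
     (\<lambda>\<omega>. (J_sum T1 J1 W T2 J2 p1 q1 p2 q2 \<omega>)\<^sup>2) (second_moment (min p1 p2) q1 q2)"
proof -
  let ?m = "min p1 p2"
  let ?Y = "\<lambda>i k. join_pair_sampled ?m (J1 (T1 ! i)) i k"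
  define E where "E i i' k k' = (if J1 (T1 ! i) = J1 (T1 ! i') then ?m else ?m\<^sup>2) *
    (if i = i' then q1 else q1\<^sup>2) * (if k = k' then q2 else q2\<^sup>2)" for i i' k k' :: nat
  have m: "0 \<le> ?m" "?m \<le> 1" using p1 p2 by auto
  have square: "(J_sum T1 J1 W T2 J2 p1 q1 p2 q2 \<omega>)\<^sup>2 = (1 / (?m * q1 * q2))\<^sup>2 *
      (\<Sum>i<length T1. \<Sum>i'<length T1. \<Sum>k<length T2. \<Sum>k'<length T2.
         join_term i k * join_term i' k' * (?Y i k \<omega> * ?Y i' k' \<omega>))" for \<omega>
    unfolding J_sum_eq_sum_join_pair_sampled power_mult_distrib
    by (simp add: power2_eq_square sum_product mult_ac)
  have "has_bochner_integral (ubs_space q1 q2 (length T1) (length T2))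
     (\<lambda>\<omega>. (J_sum T1 J1 W T2 J2 p1 q1 p2 q2 \<omega>)\<^sup>2) ((1 / (?m * q1 * q2))\<^sup>2 *
      (\<Sum>i<length T1. \<Sum>i'<length T1. \<Sum>k<length T2. \<Sum>k'<length T2.
         join_term i k * join_term i' k' * E i i' k k'))"
    unfolding square E_def using m q1 q2
    by (intro has_bochner_integral_mult_right has_bochner_integral_sum
        has_bochner_integral_join_pair_sampled_mult) auto
  also have "\<dots> = second_moment ?m q1 q2"
    unfolding second_moment_def sum_distrib_left using p1 p2 q1 q2
    by (intro sum.cong refl) (simp add: E_def power2_eq_square field_simps)
  finally show ?thesis .
qed

lemma ubs_var_eq:
  "ubs_var T1 J1 W T2 J2 p1 q1 p2 q2 = second_moment (min p1 p2) q1 q2 - join_sum\<^sup>2"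
proof -
  interpret prob_space "ubs_space q1 q2 (length T1) (length T2)"
    unfolding ubs_space_def
    by (intro prob_space_pair prob_space_PiM prob_space_uniform_measure prob_space_measure_pmf) auto
  note first = has_bochner_integral_J_sum[unfolded has_bochner_integral_iff]
  note second = has_bochner_integral_J_sum_square[unfolded has_bochner_integral_iff]
  have "ubs_var T1 J1 W T2 J2 p1 q1 p2 q2 = variance (J_sum T1 J1 W T2 J2 p1 q1 p2 q2)"
    unfolding ubs_var_def var_of_def ..
  also have "\<dots> = second_moment (min p1 p2) q1 q2 - join_sum\<^sup>2"
    using first second by (subst variance_eq) auto
  finally show ?thesis .
qed

end

end

theorem lemma6:
  fixes T1 :: "'t1 list" and J1 :: "'t1 \<Rightarrow> 'u::finite" and W :: "'t1 \<Rightarrow> real"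
    and T2 :: "'t2 list" and J2 :: "'t2 \<Rightarrow> 'u"
    and p1 q1 eps2 p2 :: real
  assumes "0 < p1" "p1 \<le> 1" "0 < q1" "q1 \<le> 1"
    and "0 < eps2" "eps2 \<le> 1" "eps2 \<le> p1"
    and "eps2 \<le> p2" "p2 \<le> 1"
  shows "ubs_var T1 J1 W T2 J2 p1 q1 p1 (eps2 / p1) \<le> ubs_var T1 J1 W T2 J2 p1 q1 p2 (eps2 / p2)"
proof -
  interpret join_tables T1 J1 W T2 J2 .
  have p2: "0 < p2" using assms by linarith
  have rate1: "0 < eps2 / p1" "eps2 / p1 \<le> 1" and rate2: "0 < eps2 / p2" "eps2 / p2 \<le> 1"
    using assms p2 by auto
  have "1 / p1 \<le> 1 / min p1 p2"
    using assms p2 by (simp add: frac_le)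
  moreover have "1 / (p1 * (eps2 / p1)) \<le> 1 / (min p1 p2 * (eps2 / p2))"
    using assms p2 by (simp add: divide_simps min_def)
  ultimately have "second_moment p1 q1 (eps2 / p1) \<le> second_moment (min p1 p2) q1 (eps2 / p2)"
    by (rule second_moment_mono[OF assms(3,4)])
  then show ?thesis
    using ubs_var_eq[OF assms(1-4) assms(1,2) rate1] ubs_var_eq[OF assms(1-4) p2 assms(9) rate2] by simp
qed

end
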